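(* $\mathcal{B}$ and $\mathcal{B}_{\mathcal{U}}$ are weak quadratic algebras, and $\widehat{\mu}$ is a $q$-measure on the weak quadratic algebra $\mathcal{B}$ that extends $\mu$ (i.e. $\mathcal{C}\subseteq\mathcal{B}$ and $\widehat{\mu}=\mu$ on $\mathcal{C}$).
   Context: For $n\ge1$, $\Omega_n$ is the set of strings $\alpha_0\alpha_1\cdots\alpha_n$ with $\alpha_k\in\{0,1\}$, $\alpha_0=0$. For $\omega=\alpha_0\cdots\alpha_n$, $\omega'=\alpha'_0\cdots\alpha'_n\in\Omega_n$ let $D^n(\omega,\omega')=2^{-n}\prod_{k=1}^n i^{|\alpha_k-\alpha_{k-1}|}\prod_{k=1}^n i^{-|\alpha'_k-\alpha'_{k-1}|}\,\delta_{\alpha_n\alpha'_n}$ ($i=\sqrt{-1}$) and for $A\subseteq\Omega_n$, $\mu_n(A)=\sum_{\omega,\omega'\in A}D^n(\omega,\omega')$. $\Omega$ is the set of infinite sequences $\alpha_0\alpha_1\cdots$ with $\alpha_k\in\{0,1\}$, $\alpha_0=0$. A cylinder set is a set $\{\alpha_0\alpha_1\cdots\in\Omega:\alpha_0\cdots\alpha_n\in E\}$ with $E\subseteq\Omega_n$; $\mathcal{C}$ is the collection of cylinder sets and $\mu$ of such a set is $\mu_n(E)$ (well defined). For $A\subseteq\Omega$ and $n\ge0$, $A^{(n)}=\{\omega\in\Omega:\text{some }\omega'\in A\text{ has the same first }n+1\text{ entries as }\omega\}$. $A$ is beneficial if $\lim_n\mu(A^{(n)})$ exists and is finite, and then $\widehat{\mu}(A)=\lim_n\mu(A^{(n)})$;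 $\mathcal{B}$ is the collection of beneficial sets. $A$ is an upper set if $A=\bigcup_n\big(\Omega\setminus(\Omega\setminus A)^{(n)}\big)$; $\mathcal{U}$ is the collection of upper sets and $\mathcal{B}_{\mathcal{U}}=\{A\in\mathcal{U}:\lim_n\mu(\Omega\setminus(\Omega\setminus A)^{(n)})\text{ exists}\}$. Sets $A,B\subseteq\Omega$ are strongly disjoint if $A^{(n)}\cap B^{(n)}=\emptyset$ for some $n$. A collection $Q\subseteq 2^\Omega$ is a weak quadratic algebra if $\emptyset,\Omega\in Q$ and whenever $A,B,C\in Q$ are (pairwise) strongly disjoint with $A\cup B,A\cup C,B\cup C\in Q$, then $A\cup B\cup C\in Q$. A $q$-measure on a weak quadratic algebra $Q$ is a map $\nu:Q\to[0,\infty)$ such that for such $A,B,C$: $\nu(A\cup B\cup C)=\nu(A\cup B)+\nu(A\cup C)+\nu(B\cup C)-\nu(A)-\nu(B)-\nu(C)$. *)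

theory Defs
  imports Complex_Main
begin

text \<open>Bits are encoded as booleans: False = 0, True = 1.
  Infinite sequences are functions nat \<Rightarrow> bool; finite strings
  alpha_0 ... alpha_n are lists of length n+1.\<close>

type_synonym path = "nat \<Rightarrow> bool"

definition Omega :: "path set" where
  "Omega = {w. w 0 = False}"

definition Omega_n :: "nat \<Rightarrow> bool list set" where
  "Omega_n n = {xs. length xs = Suc n \<and> xs ! 0 = False}"

text \<open>i^{|alpha_k - alpha_{k-1}|}: equals i if the bits differ, 1 otherwise.\<close>
definition D :: "nat \<Rightarrow> bool list \<Rightarrow> bool list \<Rightarrow> complex" where
  "D n xs ys =
     (1 / 2 ^ n) *
     (\<Prod>k\<in>{1..n}. \<i> ^ (if xs ! k = xs ! (k - 1) then 0 else 1)) *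
     (\<Prod>k\<in>{1..n}. (inverse \<i>) ^ (if ys ! k = ys ! (k - 1) then 0 else 1)) *
     (if xs ! n = ys ! n then 1 else 0)"

definition mu_n :: "nat \<Rightarrow> bool list set \<Rightarrow> complex" where
  "mu_n n A = (\<Sum>x\<in>A. \<Sum>y\<in>A. D n x y)"

definition prefix :: "nat \<Rightarrow> path \<Rightarrow> bool list" where
  "prefix n w = map w [0..<Suc n]"

definition cyl :: "nat \<Rightarrow> bool list set \<Rightarrow> path set" where
  "cyl n E = {w \<in> Omega. prefix n w \<in> E}"

definition Cyl :: "path set set" where
  "Cyl = {cyl n E | n E. 1 \<le> n \<and> E \<subseteq> Omega_n n}"

text \<open>mu on cylinder sets: the value mu_n(E) for a representation A = cyl n E
  (well defined, as stated in the paper).\<close>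
definition mu :: "path set \<Rightarrow> complex" where
  "mu A = (SOME c. \<exists>n E. 1 \<le> n \<and> E \<subseteq> Omega_n n \<and> A = cyl n E \<and> c = mu_n n E)"

definition up :: "nat \<Rightarrow> path set \<Rightarrow> path set" where
  "up n A = {w \<in> Omega. \<exists>w'\<in>A. \<forall>k\<le>n. w k = w' k}"

definition beneficial :: "path set \<Rightarrow> bool" where
  "beneficial A \<longleftrightarrow> A \<subseteq> Omega \<and> convergent (\<lambda>n. mu (up n A))"

definition Ben :: "path set set" where
  "Ben = {A. beneficial A}"

definition muhat :: "path set \<Rightarrow> complex" where
  "muhat A = lim (\<lambda>n. mu (up n A))"

definition upper_set :: "path set \<Rightarrow> bool" where
  "upper_set A \<longleftrightarrow> A \<subseteq> Omega \<and> A = (\<Union>n. Omega - up n (Omega - A))"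

definition Ben_U :: "path set set" where
  "Ben_U = {A. upper_set A \<and> convergent (\<lambda>n. mu (Omega - up n (Omega - A)))}"

definition strongly_disjoint :: "path set \<Rightarrow> path set \<Rightarrow> bool" where
  "strongly_disjoint A B \<longleftrightarrow> (\<exists>n. up n A \<inter> up n B = {})"

definition admissible_triple :: "path set set \<Rightarrow> path set \<Rightarrow> path set \<Rightarrow> path set \<Rightarrow> bool" where
  "admissible_triple Q A B C \<longleftrightarrow>
     A \<in> Q \<and> B \<in> Q \<and> C \<in> Q \<and>
     strongly_disjoint A B \<and> strongly_disjoint A C \<and> strongly_disjoint B C \<and>
     A \<union> B \<in> Q \<and> A \<union> C \<in> Q \<and> B \<union> C \<in> Q"

definition weak_quadratic_algebra :: "path set set \<Rightarrow> bool" where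
  "weak_quadratic_algebra Q \<longleftrightarrow>
     {} \<in> Q \<and> Omega \<in> Q \<and>
     (\<forall>A B C. admissible_triple Q A B C \<longrightarrow> A \<union> B \<union> C \<in> Q)"

text \<open>q-measure: values in [0,oo) (as complex numbers: real and nonnegative)
  satisfying the grade-2 additivity condition.\<close>
definition q_measure :: "path set set \<Rightarrow> (path set \<Rightarrow> complex) \<Rightarrow> bool" where
  "q_measure Q \<nu> \<longleftrightarrow>
     (\<forall>A\<in>Q. Im (\<nu> A) = 0 \<and> 0 \<le> Re (\<nu> A)) \<and>
     (\<forall>A B C. admissible_triple Q A B C \<longrightarrow>
        \<nu> (A \<union> B \<union> C) = \<nu> (A \<union> B) + \<nu> (A \<union> C) + \<nu> (B \<union> C) - \<nu> A - \<nu> B - \<nu> C)"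

end

theory Submission
  imports Defs
begin

text \<open>A cylinder of level n is determined by its base in Omega_n n, and it is also a cylinder
  of every level m \<ge> n. Summing D (Suc m) over the one-bit extensions of both strings gives
  D m, so mu is well defined on cylinders. For a fixed level, mu_n is a quadratic form in the
  base, hence satisfies the grade-2 sum rule for disjoint bases, and it is a sum of two squared
  moduli, hence nonnegative. If A, B, C are pairwise strongly disjoint, their outer
  approximations up n and inner approximations Omega - up n (Omega - _) are eventually pairwise
  disjoint level-n cylinders, and the approximation of a union is the union of the
  approximations; so the grade-2 identity holds eventually along the approximating sequences
  and passes to the limit.\<close>

lemma finite_Omega_n: "finite (Omega_n n)"
proof -
  have "finite {xs :: bool list. set xs \<subseteq> UNIV \<and> length xs = Suc n}"
    by (rule finite_lists_length_eq) simp
  then show ?thesis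
    by (rule rev_finite_subset) (auto simp: Omega_n_def)
qed

lemma prefix_eq_iff: "prefix n w = prefix n w' \<longleftrightarrow> (\<forall>k\<le>n. w k = w' k)"
  unfolding prefix_def by (auto simp: less_Suc_eq_le)

lemma take_prefix: "n \<le> m \<Longrightarrow> take (Suc n) (prefix m w) = prefix n w"
  by (simp add: prefix_def take_map del: upt_Suc)

lemma prefix_image_Omega: "prefix n ` Omega = Omega_n n"
proof (intro equalityI subsetI)
  fix xs assume "xs \<in> prefix n ` Omega"
  then show "xs \<in> Omega_n n"
    by (auto simp: prefix_def Omega_n_def Omega_def nth_map_upt simp del: upt_Suc)
next
  fix xs assume xs: "xs \<in> Omega_n n"
  define w where "w k = (if k < length xs then xs ! k else False)" for k
  have "w \<in> Omega" and "prefix n w = xs"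
    using xs by (auto simp: w_def Omega_def Omega_n_def prefix_def intro!: nth_equalityI simp del: upt_Suc)
  then show "xs \<in> prefix n ` Omega" by blast
qed

lemma prefix_image_cyl:
  assumes "E \<subseteq> Omega_n n"
  shows "prefix n ` cyl n E = E"
proof -
  have "prefix n ` cyl n E = prefix n ` Omega \<inter> E"
    unfolding cyl_def by blast
  with assms show ?thesis
    by (simp add: prefix_image_Omega Int_absorb1)
qed

lemma cyl_Un: "cyl n (E \<union> F) = cyl n E \<union> cyl n F"
  by (auto simp: cyl_def)

lemma cyl_Int: "cyl n (E \<inter> F) = cyl n E \<inter> cyl n F"
  by (auto simp: cyl_def)

lemma cyl_inject:
  assumes "cyl n E = cyl n F" "E \<subseteq> Omega_n n" "F \<subseteq> Omega_n n"
  shows "E = F"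
  by (metis assms prefix_image_cyl)

lemma cyl_disjoint_iff:
  assumes "E \<subseteq> Omega_n n" "F \<subseteq> Omega_n n"
  shows "cyl n E \<inter> cyl n F = {} \<longleftrightarrow> E \<inter> F = {}"
proof -
  have "E \<inter> F = prefix n ` (cyl n E \<inter> cyl n F)"
    using assms by (simp add: cyl_Int[symmetric] prefix_image_cyl le_infI1)
  then show ?thesis
    by auto
qed

definition lift :: "nat \<Rightarrow> nat \<Rightarrow> bool list set \<Rightarrow> bool list set" where
  "lift n m E = {xs \<in> Omega_n m. take (Suc n) xs \<in> E}"

lemma cyl_eq_cyl_lift:
  assumes "n \<le> m"
  shows "cyl n E = cyl m (lift n m E)"
  using assms by (auto simp: cyl_def lift_def take_prefix prefix_image_Omega[symmetric] Omega_def)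

lemma lift_subset: "lift n m E \<subseteq> Omega_n m"
  by (auto simp: lift_def)

lemma lift_trans:
  assumes "n \<le> m" "m \<le> k"
  shows "lift m k (lift n m E) = lift n k E"
  using assms by (auto simp: lift_def Omega_n_def min_absorb1)

section \<open>Consistency of the decoherence functionals\<close>

definition phase :: "bool list \<Rightarrow> nat \<Rightarrow> complex" where
  "phase xs n = (\<Prod>k\<in>{1..n}. \<i> ^ (if xs ! k = xs ! (k - 1) then 0 else 1))"

lemma D_eq_phase:
  "D n xs ys = 1 / 2 ^ n * phase xs n * cnj (phase ys n) * (if xs ! n = ys ! n then 1 else 0)"
  by (simp add: D_def phase_def inverse_eq_divide)

lemma phase_snoc:
  assumes "length xs = Suc n"
  shows "phase (xs @ [a]) (Suc n) = phase xs n * \<i> ^ (if a = xs ! n then 0 else 1)"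
proof -
  have "phase (xs @ [a]) n = phase xs n"
    unfolding phase_def using assms by (intro prod.cong) (auto simp: nth_append)
  then show ?thesis
    using assms by (simp add: phase_def nth_append)
qed

text \<open>Only extensions by the same bit interfere, and the factors i and cnj i = -i of the
  two possible last steps cancel unless both strings end in the same bit.\<close>

lemma sum_one_step_phases:
  "(\<Sum>a\<in>UNIV. \<Sum>b\<in>UNIV. \<i> ^ (if a = (p :: bool) then 0 else 1) * cnj (\<i> ^ (if b = q then 0 else 1))
      * (if a = b then 1 else 0 :: complex)) = (if p = q then 2 else 0)"
  unfolding UNIV_bool by (cases p; cases q) simp_all

lemma sum_D_snoc:
  assumes "length xs = Suc n" "length ys = Suc n"
  shows "(\<Sum>a\<in>UNIV. \<Sum>b\<in>UNIV. D (Suc n) (xs @ [a]) (ys @ [b])) = D n xs ys"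
proof -
  let ?c = "1 / 2 ^ Suc n * phase xs n * cnj (phase ys n)"
  have "D (Suc n) (xs @ [a]) (ys @ [b]) = ?c * (\<i> ^ (if a = xs ! n then 0 else 1)
      * cnj (\<i> ^ (if b = ys ! n then 0 else 1)) * (if a = b then 1 else 0))" for a b
    using assms by (simp add: D_eq_phase phase_snoc nth_append mult_ac)
  then have "(\<Sum>a\<in>UNIV. \<Sum>b\<in>UNIV. D (Suc n) (xs @ [a]) (ys @ [b]))
      = ?c * (if xs ! n = ys ! n then 2 else 0)"
    by (simp only: sum_distrib_left[symmetric] sum_one_step_phases)
  also have "\<dots> = D n xs ys"
    by (simp add: D_eq_phase)
  finally show ?thesis .
qed

lemma lift_Suc_eq_image_snoc:
  assumes "G \<subseteq> Omega_n n"
  shows "lift n (Suc n) G = (\<lambda>(xs, a). xs @ [a]) ` (G \<times> UNIV)"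
proof (intro equalityI subsetI)
  fix ys assume "ys \<in> lift n (Suc n) G"
  then have "ys \<noteq> []" and "butlast ys \<in> G"
    by (auto simp: lift_def Omega_n_def butlast_conv_take)
  then have "ys = (\<lambda>(xs, a). xs @ [a]) (butlast ys, last ys)" and "(butlast ys, last ys) \<in> G \<times> UNIV"
    by simp_all
  then show "ys \<in> (\<lambda>(xs, a). xs @ [a]) ` (G \<times> UNIV)"
    by blast
next
  fix ys assume "ys \<in> (\<lambda>(xs, a). xs @ [a]) ` (G \<times> UNIV)"
  then obtain xs a where "xs \<in> G" and ys: "ys = xs @ [a]"
    by auto
  with assms have "xs \<in> Omega_n n"
    by blast
  then show "ys \<in> lift n (Suc n) G"
    using \<open>xs \<in> G\<close> by (simp add: ys lift_def Omega_n_def nth_append)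
qed

lemma mu_n_lift_Suc:
  assumes "G \<subseteq> Omega_n n"
  shows "mu_n (Suc n) (lift n (Suc n) G) = mu_n n G"
proof -
  have inj: "inj_on (\<lambda>(xs, a). xs @ [a]) (G \<times> UNIV)"
    by (auto simp: inj_on_def)
  have "mu_n (Suc n) (lift n (Suc n) G)
      = (\<Sum>xs\<in>G. \<Sum>a\<in>UNIV. \<Sum>ys\<in>G. \<Sum>b\<in>UNIV. D (Suc n) (xs @ [a]) (ys @ [b]))"
    unfolding mu_n_def lift_Suc_eq_image_snoc[OF assms] sum.reindex[OF inj]
    by (simp only: sum.cartesian_product' comp_def prod.case)
  also have "\<dots> = (\<Sum>xs\<in>G. \<Sum>ys\<in>G. \<Sum>a\<in>UNIV. \<Sum>b\<in>UNIV. D (Suc n) (xs @ [a]) (ys @ [b]))"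
    by (intro sum.cong refl sum.swap)
  also have "\<dots> = mu_n n G"
    unfolding mu_n_def using assms by (intro sum.cong refl sum_D_snoc) (auto simp: Omega_n_def)
  finally show ?thesis .
qed

lemma mu_n_lift:
  assumes "E \<subseteq> Omega_n n" "n \<le> m"
  shows "mu_n m (lift n m E) = mu_n n E"
  using assms(2)
proof (induction m rule: dec_induct)
  case base
  have "lift n n E = E"
    using assms(1) by (auto simp: lift_def Omega_n_def)
  then show ?case by simp
next
  case (step k)
  have "mu_n (Suc k) (lift n (Suc k) E) = mu_n (Suc k) (lift k (Suc k) (lift n k E))"
    using step.hyps lift_trans[of n k "Suc k" E] by simp
  also have "\<dots> = mu_n n E"
    using mu_n_lift_Suc[OF lift_subset] step.IH by simp
  finally show ?case .
qed

lemma mu_n_cyl_cong: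
  assumes "cyl n E = cyl m F" "E \<subseteq> Omega_n n" "F \<subseteq> Omega_n m"
  shows "mu_n n E = mu_n m F"
proof -
  have *: "mu_n n E = mu_n m F"
    if "cyl n E = cyl m F" "E \<subseteq> Omega_n n" "F \<subseteq> Omega_n m" "n \<le> m" for n m E F
  proof -
    have "cyl m (lift n m E) = cyl m F"
      using that cyl_eq_cyl_lift[of n m E] by simp
    then have "lift n m E = F"
      by (rule cyl_inject[OF _ lift_subset that(3)])
    then show ?thesis
      using mu_n_lift[OF that(2,4)] by simp
  qed
  show ?thesis
    using *[OF assms] *[OF assms(1)[symmetric] assms(3,2)] nat_le_linear[of n m] by argo
qed

lemma mu_cyl:
  assumes "1 \<le> n" "E \<subseteq> Omega_n n"
  shows "mu (cyl n E) = mu_n n E"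
  unfolding mu_def
proof (rule some_equality)
  fix c assume "\<exists>m F. 1 \<le> m \<and> F \<subseteq> Omega_n m \<and> cyl n E = cyl m F \<and> c = mu_n m F"
  then obtain m F where "F \<subseteq> Omega_n m" "cyl n E = cyl m F" "c = mu_n m F"
    by blast
  then show "c = mu_n n E"
    using mu_n_cyl_cong[OF _ assms(2)] by metis
qed (use assms in auto)

section \<open>The grade-2 sum rule and positivity of mu\<close>

lemma double_sum_Un:
  fixes f :: "'a \<Rightarrow> 'a \<Rightarrow> 'b :: comm_monoid_add"
  assumes "finite X" "finite Y" "X \<inter> Y = {}"
  shows "(\<Sum>x\<in>X \<union> Y. \<Sum>y\<in>X \<union> Y. f x y)
    = (\<Sum>x\<in>X. \<Sum>y\<in>X. f x y) + (\<Sum>x\<in>X. \<Sum>y\<in>Y. f x y)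
      + (\<Sum>x\<in>Y. \<Sum>y\<in>X. f x y) + (\<Sum>x\<in>Y. \<Sum>y\<in>Y. f x y)"
  using assms by (simp add: sum.union_disjoint sum.distrib ac_simps)

lemma double_sum_grade2:
  fixes f :: "'a \<Rightarrow> 'a \<Rightarrow> 'b :: ab_group_add"
  assumes "finite X" "finite Y" "finite Z"
    and "X \<inter> Y = {}" "X \<inter> Z = {}" "Y \<inter> Z = {}"
  defines "S \<equiv> \<lambda>A. \<Sum>x\<in>A. \<Sum>y\<in>A. f x y"
  shows "S (X \<union> Y \<union> Z) = S (X \<union> Y) + S (X \<union> Z) + S (Y \<union> Z) - S X - S Y - S Z"
proof -
  have "(X \<union> Y) \<inter> Z = {}"
    using assms by blast
  then show ?thesis
    using assms by (simp add: S_def sum.union_disjoint sum.distrib algebra_simps)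
qed

lemma mu_n_grade2:
  assumes "X \<subseteq> Omega_n n" "Y \<subseteq> Omega_n n" "Z \<subseteq> Omega_n n"
    and "X \<inter> Y = {}" "X \<inter> Z = {}" "Y \<inter> Z = {}"
  shows "mu_n n (X \<union> Y \<union> Z) = mu_n n (X \<union> Y) + mu_n n (X \<union> Z) + mu_n n (Y \<union> Z)
    - mu_n n X - mu_n n Y - mu_n n Z"
  unfolding mu_n_def
  using assms finite_Omega_n finite_subset by (intro double_sum_grade2) blast+

lemma mu_n_eq_sum_norm_squares:
  fixes n :: nat and E :: "bool list set"
  assumes "finite E"
  defines "s \<equiv> \<lambda>b. \<Sum>x\<in>{x\<in>E. x ! n = b}. phase x n"
  shows "mu_n n E = of_real (((norm (s True))\<^sup>2 + (norm (s False))\<^sup>2) / 2 ^ n)"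
proof -
  let ?E = "\<lambda>b. {x\<in>E. x ! n = b}"
  have block: "(\<Sum>x\<in>?E b. \<Sum>y\<in>?E b. D n x y) = of_real ((norm (s b))\<^sup>2 / 2 ^ n)" for b
  proof -
    have "(\<Sum>x\<in>?E b. \<Sum>y\<in>?E b. D n x y) = 1 / 2 ^ n * (s b * cnj (s b))"
      unfolding s_def cnj_sum sum_product
      unfolding sum_distrib_left by (intro sum.cong refl) (simp add: D_eq_phase)
    then show ?thesis
      by (simp flip: complex_norm_square)
  qed
  have cross: "(\<Sum>x\<in>?E b. \<Sum>y\<in>?E c. D n x y) = 0" if "b \<noteq> c" for b c
    using that by (simp add: D_eq_phase)
  have "E = ?E True \<union> ?E False"
    by blast
  then have "mu_n n E = (\<Sum>x\<in>?E True \<union> ?E False. \<Sum>y\<in>?E True \<union> ?E False. D n x y)"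
    by (simp add: mu_n_def)
  also have "\<dots> = (\<Sum>x\<in>?E True. \<Sum>y\<in>?E True. D n x y) + (\<Sum>x\<in>?E True. \<Sum>y\<in>?E False. D n x y)
      + (\<Sum>x\<in>?E False. \<Sum>y\<in>?E True. D n x y) + (\<Sum>x\<in>?E False. \<Sum>y\<in>?E False. D n x y)"
    using assms(1) by (intro double_sum_Un) auto
  also have "\<dots> = of_real (((norm (s True))\<^sup>2 + (norm (s False))\<^sup>2) / 2 ^ n)"
    unfolding block cross[of True False, OF True_not_False] cross[of False True, OF False_not_True]
    by (simp add: add_divide_distrib)
  finally show ?thesis .
qed

lemma mu_n_nonneg: "Im (mu_n n E) = 0 \<and> 0 \<le> Re (mu_n n E)"
proof (cases "finite E")
  case True
  then show ?thesis
    by (simp add: mu_n_eq_sum_norm_squares)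
qed (simp add: mu_n_def)

lemma mu_cyl_grade2:
  assumes "1 \<le> n" "X \<subseteq> Omega_n n" "Y \<subseteq> Omega_n n" "Z \<subseteq> Omega_n n"
    and "cyl n X \<inter> cyl n Y = {}" "cyl n X \<inter> cyl n Z = {}" "cyl n Y \<inter> cyl n Z = {}"
  shows "mu (cyl n X \<union> cyl n Y \<union> cyl n Z)
    = mu (cyl n X \<union> cyl n Y) + mu (cyl n X \<union> cyl n Z) + mu (cyl n Y \<union> cyl n Z)
      - mu (cyl n X) - mu (cyl n Y) - mu (cyl n Z)"
proof -
  have "X \<inter> Y = {}" "X \<inter> Z = {}" "Y \<inter> Z = {}"
    using assms(2-) cyl_disjoint_iff by blast+
  moreover have "X \<union> Y \<subseteq> Omega_n n" "X \<union> Z \<subseteq> Omega_n n" "Y \<union> Z \<subseteq> Omega_n n"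
    "X \<union> Y \<union> Z \<subseteq> Omega_n n"
    using assms(2-4) by blast+
  ultimately show ?thesis
    unfolding cyl_Un[symmetric] using assms(1-4) by (simp only: mu_cyl mu_n_grade2)
qed

lemma tendsto_grade2:
  fixes fabc fab fac fbc fa fb fc :: "nat \<Rightarrow> 'a :: topological_ab_group_add"
  assumes "eventually (\<lambda>n. fabc n = fab n + fac n + fbc n - fa n - fb n - fc n) sequentially"
    and "fab \<longlonglongrightarrow> ab" "fac \<longlonglongrightarrow> ac" "fbc \<longlonglongrightarrow> bc" "fa \<longlonglongrightarrow> a" "fb \<longlonglongrightarrow> b" "fc \<longlonglongrightarrow> c"
  shows "fabc \<longlonglongrightarrow> ab + ac + bc - a - b - c"
proof -
  have "(\<lambda>n. fab n + fac n + fbc n - fa n - fb n - fc n) \<longlonglongrightarrow> ab + ac + bc - a - b - c"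
    using assms(2-) by (intro tendsto_intros)
  then show ?thesis
    using tendsto_cong[OF assms(1)] by blast
qed

section \<open>Outer approximations and beneficial sets\<close>

definition prefixes :: "nat \<Rightarrow> path set \<Rightarrow> bool list set" where
  "prefixes n A = prefix n ` (A \<inter> Omega)"

lemma prefixes_subset: "prefixes n A \<subseteq> Omega_n n"
  using prefix_image_Omega by (auto simp: prefixes_def)

lemma up_eq_cyl: "up n A = cyl n (prefixes n A)"
  by (auto simp: up_def cyl_def prefixes_def prefix_eq_iff Omega_def)

lemma up_Un: "up n (A \<union> B) = up n A \<union> up n B"
  by (auto simp: up_def)

lemma up_empty: "up n {} = {}"
  by (simp add: up_def)

lemma up_Omega: "up n Omega = Omega"
  by (auto simp: up_def)

lemma subset_up: "A \<subseteq> Omega \<Longrightarrow> A \<subseteq> up n A"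
  by (auto simp: up_def)

lemma up_antimono: "n \<le> m \<Longrightarrow> up m A \<subseteq> up n A"
  by (auto simp: up_def)

lemma up_cyl:
  assumes "n \<le> m"
  shows "up m (cyl n E) = cyl n E"
proof -
  have "prefix n w = prefix n w'" if "\<forall>k\<le>m. w k = w' k" for w w'
    using that assms by (simp add: prefix_eq_iff)
  then show ?thesis
    by (auto simp: up_def cyl_def) metis
qed

lemma eventually_up_disjoint:
  assumes "strongly_disjoint A B"
  shows "eventually (\<lambda>n. up n A \<inter> up n B = {}) sequentially"
proof -
  obtain N where "up N A \<inter> up N B = {}"
    using assms by (auto simp: strongly_disjoint_def)
  then have "up n A \<inter> up n B = {}" if "N \<le> n" for n
    using up_antimono[OF that] by blast
  then show ?thesis
    by (auto simp: eventually_sequentially)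
qed

lemma eventually_pairwise_up_disjoint:
  assumes "strongly_disjoint A B" "strongly_disjoint A C" "strongly_disjoint B C"
  shows "eventually (\<lambda>n. 1 \<le> n \<and> up n A \<inter> up n B = {} \<and> up n A \<inter> up n C = {}
    \<and> up n B \<inter> up n C = {}) sequentially"
  using assms eventually_ge_at_top[of 1]
  by (intro eventually_conj) (auto intro: eventually_up_disjoint)

lemma mu_up_grade2:
  assumes "1 \<le> n" "up n A \<inter> up n B = {}" "up n A \<inter> up n C = {}" "up n B \<inter> up n C = {}"
  shows "mu (up n (A \<union> B \<union> C)) = mu (up n (A \<union> B)) + mu (up n (A \<union> C)) + mu (up n (B \<union> C))
    - mu (up n A) - mu (up n B) - mu (up n C)"
  using assms unfolding up_Un unfolding up_eq_cyl by (intro mu_cyl_grade2 prefixes_subset)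

lemma beneficial_grade2:
  assumes "beneficial A" "beneficial B" "beneficial C"
    and "beneficial (A \<union> B)" "beneficial (A \<union> C)" "beneficial (B \<union> C)"
    and "strongly_disjoint A B" "strongly_disjoint A C" "strongly_disjoint B C"
  shows "beneficial (A \<union> B \<union> C)"
    and "muhat (A \<union> B \<union> C)
      = muhat (A \<union> B) + muhat (A \<union> C) + muhat (B \<union> C) - muhat A - muhat B - muhat C"
proof -
  have "(\<lambda>n. mu (up n (A \<union> B \<union> C)))
      \<longlonglongrightarrow> muhat (A \<union> B) + muhat (A \<union> C) + muhat (B \<union> C) - muhat A - muhat B - muhat C"
    using assms(1-6) unfolding beneficial_def muhat_def convergent_LIMSEQ_iff
    by (intro tendsto_grade2 eventually_mono[OF eventually_pairwise_up_disjoint[OF assms(7-9)]])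
      (auto intro: mu_up_grade2)
  moreover have "A \<union> B \<union> C \<subseteq> Omega"
    using assms(1-3) by (simp add: beneficial_def)
  ultimately show "beneficial (A \<union> B \<union> C)"
    and "muhat (A \<union> B \<union> C)
      = muhat (A \<union> B) + muhat (A \<union> C) + muhat (B \<union> C) - muhat A - muhat B - muhat C"
    by (auto simp: beneficial_def muhat_def convergent_def limI)
qed

lemma muhat_nonneg:
  assumes "beneficial A"
  shows "Im (muhat A) = 0 \<and> 0 \<le> Re (muhat A)"
proof -
  let ?S = "{z. Im z = 0 \<and> 0 \<le> Re z}"
  have "closed ?S"
    by (intro closed_Collect_conj closed_Collect_eq closed_Collect_le continuous_intros)
  moreover have "eventually (\<lambda>n. mu (up n A) \<in> ?S) sequentially"
    using eventually_ge_at_top[of 1]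
    by eventually_elim (simp add: up_eq_cyl mu_cyl prefixes_subset mu_n_nonneg)
  moreover have "(\<lambda>n. mu (up n A)) \<longlonglongrightarrow> muhat A"
    using assms by (simp add: beneficial_def muhat_def convergent_LIMSEQ_iff)
  ultimately have "muhat A \<in> ?S"
    by (intro Lim_in_closed_set) auto
  then show ?thesis
    by simp
qed

lemma beneficial_cyl:
  shows "beneficial (cyl n E)" and "muhat (cyl n E) = mu (cyl n E)"
proof -
  have "(\<lambda>m. mu (up m (cyl n E))) \<longlonglongrightarrow> mu (cyl n E)"
    by (intro tendsto_eventually eventually_mono[OF eventually_ge_at_top[of n]]) (simp add: up_cyl)
  moreover have "cyl n E \<subseteq> Omega"
    by (auto simp: cyl_def)
  ultimately show "beneficial (cyl n E)" and "muhat (cyl n E) = mu (cyl n E)"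
    by (auto simp: beneficial_def muhat_def convergent_def limI)
qed

section \<open>Inner approximations and upper sets\<close>

text \<open>The union of the level-n cylinders contained in A.\<close>

definition inner :: "nat \<Rightarrow> path set \<Rightarrow> path set" where
  "inner n A = Omega - up n (Omega - A)"

lemma inner_eq_cyl: "inner n A = cyl n (Omega_n n - prefixes n (Omega - A))"
  by (auto simp: inner_def up_eq_cyl cyl_def prefix_image_Omega[symmetric])

lemma mem_inner_iff:
  "w \<in> inner n A \<longleftrightarrow> w \<in> Omega \<and> (\<forall>w'\<in>Omega. (\<forall>k\<le>n. w k = w' k) \<longrightarrow> w' \<in> A)"
  by (auto simp: inner_def up_def)

lemma inner_subset: "inner n A \<subseteq> A"
  by (auto simp: mem_inner_iff)

lemma inner_mono: "A \<subseteq> B \<Longrightarrow> inner n A \<subseteq> inner n B"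
  unfolding subset_iff mem_inner_iff by blast

lemma inner_Un_left:
  assumes "up n A \<inter> up n B = {}" "A \<subseteq> Omega" "w \<in> inner n (A \<union> B)" "w \<in> A"
  shows "w \<in> inner n A"
  unfolding mem_inner_iff
proof (intro conjI ballI impI)
  show "w \<in> Omega"
    using assms(2,4) by blast
  fix w' assume w': "w' \<in> Omega" "\<forall>k\<le>n. w k = w' k"
  then have "w' \<in> A \<union> B"
    using assms(3) by (simp add: mem_inner_iff)
  moreover have "w' \<notin> B"
  proof
    assume "w' \<in> B"
    then have "w \<in> up n B"
      using w' \<open>w \<in> Omega\<close> by (auto simp: up_def)
    moreover have "w \<in> up n A"
      using assms(2,4) subset_up by blast
    ultimately show False
      using assms(1) by blast
  qed
  ultimately show "w' \<in> A"
    by blast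
qed

lemma inner_Un:
  assumes "up n A \<inter> up n B = {}" "A \<subseteq> Omega" "B \<subseteq> Omega"
  shows "inner n (A \<union> B) = inner n A \<union> inner n B"
proof (intro equalityI subsetI)
  fix w assume w: "w \<in> inner n (A \<union> B)"
  then have "w \<in> A \<or> w \<in> B"
    using inner_subset by blast
  moreover have "up n B \<inter> up n A = {}" "w \<in> inner n (B \<union> A)"
    using assms(1) w by (auto simp: Un_commute)
  ultimately show "w \<in> inner n A \<union> inner n B"
    using inner_Un_left[OF assms(1,2) w] inner_Un_left[of n B A w] assms(3) by blast
next
  show "w \<in> inner n (A \<union> B)" if "w \<in> inner n A \<union> inner n B" for w
    using that inner_mono[of A "A \<union> B"] inner_mono[of B "A \<union> B"] by blast
qed

lemma upper_set_iff_subset_inner: "upper_set A \<longleftrightarrow> A \<subseteq> Omega \<and> A \<subseteq> (\<Union>n. inner n A)"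
  using inner_subset by (auto simp: upper_set_def inner_def[symmetric])

lemma upper_set_Un:
  assumes "upper_set A" "upper_set B"
  shows "upper_set (A \<union> B)"
  using assms inner_mono[of A "A \<union> B"] inner_mono[of B "A \<union> B"]
  unfolding upper_set_iff_subset_inner by blast

lemma mu_inner_grade2:
  assumes "1 \<le> n" "up n A \<inter> up n B = {}" "up n A \<inter> up n C = {}" "up n B \<inter> up n C = {}"
    and "A \<subseteq> Omega" "B \<subseteq> Omega" "C \<subseteq> Omega"
  shows "mu (inner n (A \<union> B \<union> C))
    = mu (inner n (A \<union> B)) + mu (inner n (A \<union> C)) + mu (inner n (B \<union> C))
      - mu (inner n A) - mu (inner n B) - mu (inner n C)"
proof -
  have "up n (A \<union> B) \<inter> up n C = {}"
    using assms(3,4) by (auto simp: up_Un)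
  then have "inner n (A \<union> B \<union> C) = inner n A \<union> inner n B \<union> inner n C"
    using assms by (simp add: inner_Un)
  moreover have "inner n (A \<union> B) = inner n A \<union> inner n B" "inner n (A \<union> C) = inner n A \<union> inner n C"
    "inner n (B \<union> C) = inner n B \<union> inner n C"
    using assms by (simp_all add: inner_Un)
  moreover have "inner n X \<inter> inner n Y = {}"
    if "up n X \<inter> up n Y = {}" "X \<subseteq> Omega" "Y \<subseteq> Omega" for X Y
    using that inner_subset subset_up by blast
  ultimately show ?thesis
    using assms unfolding inner_eq_cyl by (simp add: mu_cyl_grade2)
qed

lemma Ben_U_iff: "A \<in> Ben_U \<longleftrightarrow> upper_set A \<and> convergent (\<lambda>n. mu (inner n A))"
  by (simp add: Ben_U_def inner_def)

lemma Ben_U_grade2: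
  assumes "A \<in> Ben_U" "B \<in> Ben_U" "C \<in> Ben_U" "A \<union> B \<in> Ben_U" "A \<union> C \<in> Ben_U" "B \<union> C \<in> Ben_U"
    and "strongly_disjoint A B" "strongly_disjoint A C" "strongly_disjoint B C"
  shows "A \<union> B \<union> C \<in> Ben_U"
proof -
  have Omega: "A \<subseteq> Omega" "B \<subseteq> Omega" "C \<subseteq> Omega"
    using assms(1-3) by (simp_all add: Ben_U_iff upper_set_def)
  let ?l = "\<lambda>X. lim (\<lambda>n. mu (inner n X))"
  have "(\<lambda>n. mu (inner n (A \<union> B \<union> C)))
      \<longlonglongrightarrow> ?l (A \<union> B) + ?l (A \<union> C) + ?l (B \<union> C) - ?l A - ?l B - ?l C"
    using assms(1-6) unfolding Ben_U_iff convergent_LIMSEQ_iff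
    by (intro tendsto_grade2 eventually_mono[OF eventually_pairwise_up_disjoint[OF assms(7-9)]])
      (auto intro: mu_inner_grade2[OF _ _ _ _ Omega])
  then have "convergent (\<lambda>n. mu (inner n (A \<union> B \<union> C)))"
    by (rule convergentI)
  moreover have "upper_set (A \<union> B \<union> C)"
    using assms(1-3) by (simp add: Ben_U_iff upper_set_Un)
  ultimately show ?thesis
    by (simp add: Ben_U_iff)
qed

lemma admissible_triple_Ben:
  "admissible_triple Ben A B C \<longleftrightarrow>
    beneficial A \<and> beneficial B \<and> beneficial C \<and>
    strongly_disjoint A B \<and> strongly_disjoint A C \<and> strongly_disjoint B C \<and>
    beneficial (A \<union> B) \<and> beneficial (A \<union> C) \<and> beneficial (B \<union> C)"
  by (simp add: admissible_triple_def Ben_def)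

lemma weak_quadratic_algebra_Ben: "weak_quadratic_algebra Ben"
  unfolding weak_quadratic_algebra_def
proof (intro conjI allI impI)
  show "{} \<in> Ben" "Omega \<in> Ben"
    by (simp_all add: Ben_def beneficial_def up_empty up_Omega convergent_const)
  fix A B C
  assume "admissible_triple Ben A B C"
  then show "A \<union> B \<union> C \<in> Ben"
    unfolding admissible_triple_Ben by (simp add: Ben_def beneficial_grade2(1))
qed

lemma weak_quadratic_algebra_Ben_U: "weak_quadratic_algebra Ben_U"
  unfolding weak_quadratic_algebra_def
proof (intro conjI allI impI)
  show "{} \<in> Ben_U" "Omega \<in> Ben_U"
    by (simp_all add: Ben_U_def upper_set_def up_empty up_Omega convergent_const)
  fix A B C
  assume "admissible_triple Ben_U A B C"
  then show "A \<union> B \<union> C \<in> Ben_U"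
    unfolding admissible_triple_def by (intro Ben_U_grade2) simp_all
qed

lemma q_measure_muhat: "q_measure Ben muhat"
  unfolding q_measure_def admissible_triple_Ben
  by (auto simp: Ben_def muhat_nonneg intro: beneficial_grade2(2))

lemma Cyl_subset_Ben: "Cyl \<subseteq> Ben"
  by (auto simp: Cyl_def Ben_def beneficial_cyl)

lemma muhat_Cyl: "A \<in> Cyl \<Longrightarrow> muhat A = mu A"
  by (auto simp: Cyl_def beneficial_cyl)

theorem theorem4p7:
  shows "weak_quadratic_algebra Ben \<and> weak_quadratic_algebra Ben_U \<and>
         q_measure Ben muhat \<and> Cyl \<subseteq> Ben \<and> (\<forall>A\<in>Cyl. muhat A = mu A)"
  using weak_quadratic_algebra_Ben weak_quadratic_algebra_Ben_U q_measure_muhat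
    Cyl_subset_Ben muhat_Cyl by blast

end
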